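(* Let $A=\{a_1,\dots,a_k\}$ with $k\ge2$ and let $Z\subseteq A^+$ be a finite code of standard form with $\gcd(|Z_{a_1}|,\dots,|Z_{a_k}|)>1$. Fix $t\in\{1,\dots,k\}$ and $w\in Z_{a_t}$ with $|w|=\min\{|z|: z\in Z\}$. Let $P_w$ be the set of non-empty proper prefixes of $w$, and let $D$ be the set of integers $d\ge2$ dividing all of $|Z_{a_1}|,\dots,|Z_{a_k}|$. For $u\in P_w$ let $Q_u=\{U\subseteq u^{-1}Z_{a_t}: |U|\in D\}$, and for a non-empty finite set $Y$ let $R_Y=\{V\subseteq \bigcap_{y\in Y}Zy^{-1}: |V|=|Z|/|Y|\}$. Then $Z$ is an alt-induced code if and only if there exist $u\in P_w$, $Y\in Q_u$ and $X\in R_Y$ such that $Z=XY$.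
   Context: $A^+$ is the set of non-empty words over $A$; $|w|$ is the length of a word, $|S|$ the cardinality of a set; $XY=\{xy:x\in X,y\in Y\}$. For $a\in A$, $Z_a$ is the set of words of $Z$ beginning with $a$. For a word $u$: $u^{-1}S=\{v\in A^*: uv\in S\}$ and $Su^{-1}=\{v\in A^*: vu\in S\}$. A code is a subset of $A^+$ in which every word has at most one factorization into its elements. A finite code $Z$ over $A$ is of standard form if every word of $Z$ has length at least $2$, it is not the case that all words of $Z$ begin with the same letter, and it is not the case that all words of $Z$ end with the same letter. For non-empty $X,Y\subseteq A^+$, $(X,Y)$ is an alternative code if $XY$ is a code and each element of $XY$ has exactly one factorization $xy$ with $x\in X,y\in Y$ (equivalently, no word admits two different similar alternative factorizations on $(X,Y)$). $Z$ is an alt-induced code if $Z=XY$ for some alternative code $(X,Y)$. *)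

theory Defs
  imports Complex_Main
begin

definition nonempty_words :: "'a set \<Rightarrow> 'a list set" where
  "nonempty_words A = lists A - {[]}"

definition is_code :: "'a list set \<Rightarrow> bool" where
  "is_code Z \<longleftrightarrow> Z \<subseteq> UNIV - {[]} \<and>
     (\<forall>xs \<in> lists Z. \<forall>ys \<in> lists Z. concat xs = concat ys \<longrightarrow> xs = ys)"

definition standard_form :: "'a list set \<Rightarrow> bool" where
  "standard_form Z \<longleftrightarrow> finite Z \<and> is_code Z \<and> (\<forall>z\<in>Z. 2 \<le> length z) \<and>
     \<not> (\<exists>a. \<forall>z\<in>Z. hd z = a) \<and> \<not> (\<exists>a. \<forall>z\<in>Z. last z = a)"

definition word_prod :: "'a list set \<Rightarrow> 'a list set \<Rightarrow> 'a list set" where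
  "word_prod X Y = {x @ y | x y. x \<in> X \<and> y \<in> Y}"

definition starting_with :: "'a list set \<Rightarrow> 'a \<Rightarrow> 'a list set" where
  "starting_with Z a = {z \<in> Z. z \<noteq> [] \<and> hd z = a}"

definition left_quot :: "'a list \<Rightarrow> 'a list set \<Rightarrow> 'a list set" where
  "left_quot u S = {v. u @ v \<in> S}"

definition right_quot :: "'a list set \<Rightarrow> 'a list \<Rightarrow> 'a list set" where
  "right_quot S u = {v. v @ u \<in> S}"

definition alternative_code :: "'a set \<Rightarrow> 'a list set \<Rightarrow> 'a list set \<Rightarrow> bool" where
  "alternative_code A X Y \<longleftrightarrow>
     X \<noteq> {} \<and> Y \<noteq> {} \<and> X \<subseteq> nonempty_words A \<and> Y \<subseteq> nonempty_words A \<and>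
     is_code (word_prod X Y) \<and>
     (\<forall>z \<in> word_prod X Y. \<exists>!p. fst p \<in> X \<and> snd p \<in> Y \<and> fst p @ snd p = z)"

definition alt_induced :: "'a set \<Rightarrow> 'a list set \<Rightarrow> bool" where
  "alt_induced A Z \<longleftrightarrow> (\<exists>X Y. alternative_code A X Y \<and> Z = word_prod X Y)"

end

theory Submission
  imports Defs
begin

text \<open>
  If \<open>Z = XY\<close> with unique factorizations, then \<open>|Z| = |X||Y|\<close> and \<open>Z\<^sub>a = X\<^sub>aY\<close>, so \<open>|Y|\<close>
  divides every \<open>|Z\<^sub>a|\<close>; \<open>|Y| \<ge> 2\<close> because the words of \<open>Z\<close> do not all end with the same
  letter, and the factor \<open>x\<close> of \<open>w = xy\<close> is the required prefix \<open>u\<close>. Conversely, \<open>|X||Y| = |Z|\<close>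
  forces unique factorizations, and \<open>Y \<subseteq> u\<inverse>Z\<close> with \<open>u\<close> shorter than every word of \<open>Z\<close>
  excludes the empty word from \<open>Y\<close>. The empty word may still lie in \<open>X\<close>; then
  \<open>Z\<^sub>a = Y\<^sub>a \<union> X\<^sub>aY\<close> disjointly, so \<open>|Y|\<close> divides \<open>|Y\<^sub>a|\<close>, and for \<open>a\<close> the first letter of
  some word of \<open>Y\<close> this gives \<open>Y\<^sub>a = Y\<close>. Moving this common first letter from the words
  of \<open>Y\<close> to the end of the words of \<open>X\<close> yields an alternative code with the same product.
\<close>

lemma word_prod_eq_image: "word_prod X Y = (\<lambda>(x, y). x @ y) ` (X \<times> Y)"
  by (auto simp: word_prod_def)

lemma word_prod_memI: "x \<in> X \<Longrightarrow> y \<in> Y \<Longrightarrow> x @ y \<in> word_prod X Y"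
  by (auto simp: word_prod_def)

lemma word_prod_memE:
  assumes "z \<in> word_prod X Y"
  obtains x y where "x \<in> X" "y \<in> Y" "z = x @ y"
  using assms by (auto simp: word_prod_def)

lemma card_word_prod:
  "inj_on (\<lambda>(x, y). x @ y) (X \<times> Y) \<Longrightarrow> card (word_prod X Y) = card X * card Y"
  by (simp add: word_prod_eq_image card_image card_cartesian_product)

lemma inj_on_append_if_card_word_prod:
  assumes "finite X" "finite Y" "card (word_prod X Y) = card X * card Y"
  shows "inj_on (\<lambda>(x, y). x @ y) (X \<times> Y)"
  using assms by (intro eq_card_imp_inj_on) (simp_all add: word_prod_eq_image card_cartesian_product)

lemma finite_word_prod_factors:
  assumes "inj_on (\<lambda>(x, y). x @ y) (X \<times> Y)" "finite (word_prod X Y)" "X \<noteq> {}" "Y \<noteq> {}"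
  shows "finite X" "finite Y"
  using assms finite_imageD[OF _ assms(1)]
  by (auto simp: word_prod_eq_image finite_cartesian_product_iff)

lemma alternative_code_iff_inj_on:
  "alternative_code A X Y \<longleftrightarrow>
     X \<noteq> {} \<and> Y \<noteq> {} \<and> X \<subseteq> nonempty_words A \<and> Y \<subseteq> nonempty_words A \<and>
     is_code (word_prod X Y) \<and> inj_on (\<lambda>(x, y). x @ y) (X \<times> Y)"
proof -
  have "(\<forall>z \<in> word_prod X Y. \<exists>!p. fst p \<in> X \<and> snd p \<in> Y \<and> fst p @ snd p = z)
        \<longleftrightarrow> inj_on (\<lambda>(x, y). x @ y) (X \<times> Y)"
    unfolding inj_on_def word_prod_def by (auto simp: Ex1_def) metis+
  then show ?thesis unfolding alternative_code_def by blast
qed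

lemma starting_with_word_prod:
  assumes "[] \<notin> Y"
  shows "starting_with (word_prod X Y) a =
    word_prod (starting_with X a) Y \<union> word_prod (X \<inter> {[]}) (starting_with Y a)"
  using assms unfolding starting_with_def word_prod_def
  by (auto simp: hd_append split: if_split_asm) metis+

lemma card_starting_with_word_prod:
  assumes inj: "inj_on (\<lambda>(x, y). x @ y) (X \<times> Y)" and "finite X" "finite Y" "[] \<notin> Y"
  shows "card (starting_with (word_prod X Y) a) =
    card (starting_with X a) * card Y + card (X \<inter> {[]}) * card (starting_with Y a)"
proof -
  let ?S = "starting_with X a \<times> Y \<union> (X \<inter> {[]}) \<times> starting_with Y a"
  have "starting_with (word_prod X Y) a = (\<lambda>(x, y). x @ y) ` ?S"
    unfolding starting_with_word_prod[OF assms(4)] by (simp add: word_prod_eq_image image_Un)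
  moreover have "?S \<subseteq> X \<times> Y"
    and "starting_with X a \<times> Y \<inter> (X \<inter> {[]}) \<times> starting_with Y a = {}"
    by (auto simp: starting_with_def)
  moreover have "finite (starting_with X a)" "finite (starting_with Y a)"
    using assms(2,3) by (simp_all add: starting_with_def)
  ultimately show ?thesis
    using assms(2,3)
    by (simp add: card_image[OF inj_on_subset[OF inj]] card_Un_disjoint card_cartesian_product)
qed

corollary card_dvd_card_starting_with_word_prod:
  assumes "inj_on (\<lambda>(x, y). x @ y) (X \<times> Y)" "finite X" "finite Y" "[] \<notin> X" "[] \<notin> Y"
  shows "card Y dvd card (starting_with (word_prod X Y) a)"
  using card_starting_with_word_prod[OF assms(1-3,5)] assms(4) by simp

lemma starting_with_hd_eq_if_card_dvd:
  assumes inj: "inj_on (\<lambda>(x, y). x @ y) (X \<times> Y)" and "finite X" "finite Y"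
    and "[] \<in> X" "[] \<notin> Y" "y \<in> Y"
    and "card Y dvd card (starting_with (word_prod X Y) (hd y))"
  shows "starting_with Y (hd y) = Y"
proof -
  have "card Y dvd card (starting_with Y (hd y))"
    using card_starting_with_word_prod[OF inj assms(2,3,5), of "hd y"] assms(4,7)
    by (simp add: dvd_add_right_iff)
  moreover have "y \<in> starting_with Y (hd y)"
    using assms(5,6) by (auto simp: starting_with_def)
  ultimately have "card Y \<le> card (starting_with Y (hd y))"
    using assms(3) by (intro dvd_imp_le) (auto simp: starting_with_def card_gt_0_iff)
  then show ?thesis
    using assms(3) by (intro card_seteq) (auto simp: starting_with_def)
qed

lemma word_prod_shift_letter:
  assumes "starting_with Y a = Y"
  shows "word_prod ((\<lambda>x. x @ [a]) ` X) (tl ` Y) = word_prod X Y"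
proof -
  have shift: "x @ y = (x @ [a]) @ tl y" if "y \<in> Y" for x y
  proof -
    have "y \<noteq> [] \<and> hd y = a"
      using that assms unfolding starting_with_def by blast
    then show ?thesis by (cases y) auto
  qed
  show ?thesis
  proof (intro set_eqI iffI)
    fix z assume "z \<in> word_prod ((\<lambda>x. x @ [a]) ` X) (tl ` Y)"
    then obtain x y where "x \<in> X" "y \<in> Y" "z = (x @ [a]) @ tl y"
      by (auto elim!: word_prod_memE)
    then show "z \<in> word_prod X Y"
      using shift by (metis word_prod_memI)
  next
    fix z assume "z \<in> word_prod X Y"
    then obtain x y where "x \<in> X" "y \<in> Y" "z = x @ y"
      by (rule word_prod_memE)
    then show "z \<in> word_prod ((\<lambda>x. x @ [a]) ` X) (tl ` Y)"
      using shift by (metis imageI word_prod_memI)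
  qed
qed

lemma two_le_card_if_last_not_constant:
  assumes "finite Y" "[] \<notin> Y" "\<nexists>b. \<forall>z\<in>word_prod X Y. last z = b"
  shows "2 \<le> card Y"
proof (rule ccontr)
  assume "\<not> 2 \<le> card Y"
  then consider "Y = {}" | y where "Y = {y}"
    using assms(1) by (metis One_nat_def card_0_eq card_1_singletonE less_2_cases not_le)
  then show False
    using assms(2,3) by cases (auto simp: word_prod_def)
qed

lemma alt_induced_word_prod_if_Nil_notin:
  assumes "X \<noteq> {}" "Y \<noteq> {}" "[] \<notin> X" "[] \<notin> Y" "word_prod X Y \<subseteq> lists A"
    and "is_code (word_prod X Y)" "inj_on (\<lambda>(x, y). x @ y) (X \<times> Y)"
  shows "alt_induced A (word_prod X Y)"
proof -
  have "x \<in> lists A \<and> y \<in> lists A" if "x \<in> X" "y \<in> Y" for x y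
    using word_prod_memI[OF that] assms(5) by auto
  then have "X \<subseteq> lists A" "Y \<subseteq> lists A"
    using assms(1,2) by blast+
  then have "alternative_code A X Y"
    using assms by (auto simp: alternative_code_iff_inj_on nonempty_words_def)
  then show ?thesis
    by (auto simp: alt_induced_def)
qed

lemma alt_induced_word_prod:
  assumes "X \<noteq> {}" "Y \<noteq> {}" "finite X" "finite Y" "[] \<notin> Y"
    and lists: "word_prod X Y \<subseteq> lists A" and code: "is_code (word_prod X Y)"
    and inj: "inj_on (\<lambda>(x, y). x @ y) (X \<times> Y)"
    and long: "\<forall>z\<in>word_prod X Y. 2 \<le> length z"
    and dvd: "\<forall>a\<in>A. card Y dvd card (starting_with (word_prod X Y) a)"
  shows "alt_induced A (word_prod X Y)"
proof (cases "[] \<in> X")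
  case False
  then show ?thesis
    using assms by (intro alt_induced_word_prod_if_Nil_notin)
next
  case True
  then have Y_sub: "Y \<subseteq> word_prod X Y"
    using word_prod_memI[of "[]" X] by auto
  obtain y where y: "y \<in> Y"
    using assms(2) by blast
  define a where "a = hd y"
  have "a \<in> A"
    using Y_sub y lists assms(5) unfolding a_def by (cases y) auto
  then have Y_a: "starting_with Y a = Y"
    unfolding a_def using dvd y True assms(3-5)
    by (intro starting_with_hd_eq_if_card_dvd[OF inj]) auto
  define X' where "X' = (\<lambda>x. x @ [a]) ` X"
  define Y' where "Y' = tl ` Y"
  have Z': "word_prod X' Y' = word_prod X Y"
    unfolding X'_def Y'_def by (rule word_prod_shift_letter[OF Y_a])
  have hd_Y: "y \<noteq> [] \<and> hd y = a" if "y \<in> Y" for y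
    using that Y_a unfolding starting_with_def by blast
  have "card X' = card X"
    unfolding X'_def by (intro card_image inj_onI) simp
  moreover have "card Y' = card Y"
    unfolding Y'_def using hd_Y by (intro card_image inj_onI) (metis list.expand)
  ultimately have "inj_on (\<lambda>(x, y). x @ y) (X' \<times> Y')"
    using assms(3,4) Z' card_word_prod[OF inj]
    by (intro inj_on_append_if_card_word_prod) (simp_all add: X'_def Y'_def)
  moreover have "[] \<notin> Y'"
  proof
    assume "[] \<in> Y'"
    then obtain y where "y \<in> Y" "tl y = []"
      unfolding Y'_def by (metis imageE)
    then show False
      using long Y_sub by (cases y) (auto dest!: subsetD)
  qed
  moreover have "X' \<noteq> {}" "Y' \<noteq> {}" "[] \<notin> X'"
    using assms(1,2) by (auto simp: X'_def Y'_def)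
  ultimately have "alt_induced A (word_prod X' Y')"
    using lists code Z' by (intro alt_induced_word_prod_if_Nil_notin) simp_all
  then show ?thesis
    using Z' by simp
qed

lemma left_quot_starting_with_hd:
  "u \<noteq> [] \<Longrightarrow> left_quot u (starting_with Z (hd u)) = left_quot u Z"
  by (auto simp: left_quot_def starting_with_def)

lemma alt_induced_imp_factorization:
  assumes "alt_induced A Z" "finite Z" "\<nexists>b. \<forall>z\<in>Z. last z = b" "w \<in> Z"
  obtains u v X Y where "u \<noteq> []" "v \<noteq> []" "u @ v = w" "Y \<subseteq> left_quot u Z"
    "2 \<le> card Y" "\<forall>a. card Y dvd card (starting_with Z a)"
    "X \<subseteq> (\<Inter>y\<in>Y. right_quot Z y)" "card Z = card X * card Y" "Z = word_prod X Y"
proof -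
  obtain X Y where "alternative_code A X Y" and Z: "Z = word_prod X Y"
    using assms(1) by (auto simp: alt_induced_def)
  then have ne: "X \<noteq> {}" "Y \<noteq> {}" "[] \<notin> X" "[] \<notin> Y"
    and inj: "inj_on (\<lambda>(x, y). x @ y) (X \<times> Y)"
    by (auto simp: alternative_code_iff_inj_on nonempty_words_def)
  have fin: "finite X" "finite Y"
    using finite_word_prod_factors[OF inj _ ne(1,2)] assms(2) Z by auto
  obtain u v where uv: "u \<in> X" "v \<in> Y" "w = u @ v"
    using assms(4) Z by (auto elim: word_prod_memE)
  show thesis
  proof (rule that)
    show "Y \<subseteq> left_quot u Z"
      using uv(1) by (auto simp: Z left_quot_def intro: word_prod_memI)
    show "X \<subseteq> (\<Inter>y\<in>Y. right_quot Z y)"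
      by (auto simp: Z right_quot_def intro: word_prod_memI)
    show "2 \<le> card Y"
      using two_le_card_if_last_not_constant fin(2) ne(4) assms(3) Z by blast
    show "\<forall>a. card Y dvd card (starting_with Z a)"
      using card_dvd_card_starting_with_word_prod[OF inj fin ne(3,4)] Z by blast
  qed (use uv ne card_word_prod[OF inj] Z in auto)
qed

lemma factorization_imp_alt_induced:
  assumes "standard_form Z" "Z \<subseteq> lists A" "u \<notin> Z" "Y \<subseteq> left_quot u Z" "2 \<le> card Y"
    and "\<forall>a\<in>A. card Y dvd card (starting_with Z a)"
    and "card Z = card X * card Y" "Z = word_prod X Y"
  shows "alt_induced A Z"
proof -
  have Z: "finite Z" "Z \<noteq> {}" "is_code Z" "\<forall>z\<in>Z. 2 \<le> length z"
    using assms(1) by (auto simp: standard_form_def)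
  have "finite Y" "Y \<noteq> {}"
    using assms(5) by (auto intro: card_ge_0_finite)
  moreover have "finite X" "X \<noteq> {}"
    using Z(1,2) assms(7) by (auto simp: card_gt_0_iff[symmetric])
  moreover have "[] \<notin> Y"
    using assms(3,4) by (auto simp: left_quot_def)
  ultimately show ?thesis
    using assms Z inj_on_append_if_card_word_prod[of X Y]
    by (intro alt_induced_word_prod[of X Y A, folded assms(8)]) auto
qed

theorem propositionP:
  fixes A :: "'a set" and Z :: "'a list set" and a_t :: 'a and w :: "'a list"
  assumes "finite A" and "card A \<ge> 2"
    and "Z \<subseteq> nonempty_words A"
    and "standard_form Z"
    and "Gcd ((\<lambda>a. card (starting_with Z a)) ` A) > 1"
    and "a_t \<in> A" and "w \<in> starting_with Z a_t"
    and "length w = Min (length ` Z)"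
  shows "alt_induced A Z \<longleftrightarrow>
    (let Pw = {u. u \<noteq> [] \<and> (\<exists>v. v \<noteq> [] \<and> u @ v = w)};
         D = {d::nat. d \<ge> 2 \<and> (\<forall>a\<in>A. d dvd card (starting_with Z a))};
         Q = (\<lambda>u. {U. U \<subseteq> left_quot u (starting_with Z a_t) \<and> card U \<in> D});
         R = (\<lambda>Y. {V. V \<subseteq> (\<Inter>y\<in>Y. right_quot Z y) \<and>
                        real (card V) = real (card Z) / real (card Y)})
     in \<exists>u\<in>Pw. \<exists>Y\<in>Q u. \<exists>X\<in>R Y. Z = word_prod X Y)"
proof -
  have Z: "finite Z" "\<nexists>b. \<forall>z\<in>Z. last z = b" "Z \<subseteq> lists A"
    using assms(3,4) by (auto simp: standard_form_def nonempty_words_def)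
  have w: "w \<in> Z" "hd w = a_t"
    using assms(7) by (auto simp: starting_with_def)
  have prefix_notin: "u \<notin> Z" if "u @ v = w" "v \<noteq> []" for u v
  proof
    assume "u \<in> Z"
    then have "length w \<le> length u"
      using assms(8) Z(1) by simp
    with that show False
      by auto
  qed
  have quot: "left_quot u (starting_with Z a_t) = left_quot u Z" if "u \<noteq> []" "u @ v = w" for u v
    using left_quot_starting_with_hd[OF that(1)] that w(2) by auto
  have card_div: "real (card X) = real (card Z) / real (card Y) \<longleftrightarrow> card Z = card X * card Y"
    if "2 \<le> card Y" for X Y :: "'a list set"
    using that by (simp add: field_simps flip: of_nat_mult) presburger
  show ?thesis
    unfolding Let_def
  proof
    assume "alt_induced A Z"
    then obtain u v X Y where u: "u \<noteq> []" "v \<noteq> []" "u @ v = w"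
      and Y: "Y \<subseteq> left_quot u Z" "2 \<le> card Y" "\<forall>a. card Y dvd card (starting_with Z a)"
      and X: "X \<subseteq> (\<Inter>y\<in>Y. right_quot Z y)" "card Z = card X * card Y"
      and XY: "Z = word_prod X Y"
      by (rule alt_induced_imp_factorization[OF _ Z(1,2) w(1)])
    show "\<exists>u\<in>{u. u \<noteq> [] \<and> (\<exists>v. v \<noteq> [] \<and> u @ v = w)}.
      \<exists>Y\<in>{U. U \<subseteq> left_quot u (starting_with Z a_t) \<and>
          card U \<in> {d. 2 \<le> d \<and> (\<forall>a\<in>A. d dvd card (starting_with Z a))}}.
      \<exists>X\<in>{V. V \<subseteq> (\<Inter>y\<in>Y. right_quot Z y) \<and> real (card V) = real (card Z) / real (card Y)}.
        Z = word_prod X Y"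
    proof (intro bexI CollectI conjI)
      show "Y \<subseteq> left_quot u (starting_with Z a_t)"
        using Y(1) quot[OF u(1,3)] by simp
      show "real (card X) = real (card Z) / real (card Y)"
        using card_div[OF Y(2)] X(2) by simp
    qed (use u Y X XY in auto)
  next
    assume "\<exists>u\<in>{u. u \<noteq> [] \<and> (\<exists>v. v \<noteq> [] \<and> u @ v = w)}.
      \<exists>Y\<in>{U. U \<subseteq> left_quot u (starting_with Z a_t) \<and>
          card U \<in> {d. 2 \<le> d \<and> (\<forall>a\<in>A. d dvd card (starting_with Z a))}}.
      \<exists>X\<in>{V. V \<subseteq> (\<Inter>y\<in>Y. right_quot Z y) \<and> real (card V) = real (card Z) / real (card Y)}.
        Z = word_prod X Y"
    then obtain u v X Y where "u \<noteq> []" "v \<noteq> []" "u @ v = w"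
      "Y \<subseteq> left_quot u Z" "2 \<le> card Y" "\<forall>a\<in>A. card Y dvd card (starting_with Z a)"
      "card Z = card X * card Y" "Z = word_prod X Y"
      using quot card_div by auto
    then show "alt_induced A Z"
      using factorization_imp_alt_induced[OF assms(4) Z(3) prefix_notin] by blast
  qed
qed

end
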